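(* Let $\mathcal C$ be a $k$-coloured operad. Let $\mathcal H(t)=\sum_{n\ge1}\#\mathrm{Env}(\mathcal C)(n)\,t^n$ be the Hilbert series of its enveloping operad. For $c\in[k]$, let $\mathcal H_c(t)$ be the generating series, by arity, of the anticoloured syntax trees on $\mathcal C^+$ whose root has output colour $c$. Then $$\mathcal H(t)=t+\mathcal H_1(t)+\dots+\mathcal H_k(t),$$ and for all $c\in[k]$, $$\mathcal H_c(t)=\mathcal B_c\big(\mathcal H(t)-\mathcal H_1(t),\dots,\mathcal H(t)-\mathcal H_k(t)\big),$$ where $\mathcal B_1,\dots,\mathcal B_k$ are the coloured Hilbert series of $\mathcal C$.
   Context: All operads are nonsymmetric operads in the category of sets. Fix $k\ge1$ and write $[k]=\{1,\dots,k\}$. A $k$-coloured operad $\mathcal C=\biguplus_{n\ge1}\mathcal C(n)$ assigns to each $x\in\mathcal C(n)$ an output colour $\mathrm{Out}(x)\in[k]$ and input colours $\mathrm{In}_1(x),\dots,\mathrm{In}_n(x)$. It has partial compositions $x\circ_i y$, defined exactly when $\mathrm{Out}(y)=\mathrm{In}_i(x)$, satisfying the usual axioms. It is assumed that $\mathcal C(1)=\{\mathbf 1_c:c\in[k]\}$ consists of units and that each $\mathcal C(n)$ is finite. Let $\mathcal C^+=\mathcal C\setminus\mathcal C(1)$. The enveloping operad $\mathrm{Env}(\mathcal C)$ is the quotient of the free uncoloured operad on $\mathcal C^+$ (colours forgotten) by the smallest operadic congruence with $\mathfrak c(x)\circ_i\mathfrak c(y)\equiv\mathfrak c(x\circ_i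 y)$ whenever $x\circ_i y$ is defined in $\mathcal C$, where $\mathfrak c(x)$ is the corolla labelled $x$. Its elements of arity $n$ are in bijection with the anticoloured syntax trees on $\mathcal C^+$ with $n$ leaves (the one-leaf tree corresponding to the unit). An anticoloured syntax tree is a planar rooted tree whose internal nodes of arity $\ell$ are labelled by elements of $\mathcal C(\ell)$, such that whenever a node labelled $y$ is the $i$th child of a node labelled $x$, one has $\mathrm{In}_i(x)\ne\mathrm{Out}(y)$. The output colour of such a tree is the output colour of the label of its root. The coloured Hilbert series of $\mathcal C$ are the commutative series $$\mathcal B_c(z_1,\dots,z_k)=\sum_{x\in\mathcal C^+,\ \mathrm{Out}(x)=c}\ \prod_{i=1}^{|x|}z_{\mathrm{In}_i(x)},\qquad c\in[k],$$ where $|x|$ is the arity of $x$. *)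

theory Defs
  imports "HOL-Computational_Algebra.Formal_Power_Series"
begin

text \<open>A k-coloured nonsymmetric set operad. Colours are 1..k, input positions are 1-based.
  comp x i y is the partial composition x o_i y; unit c is the unit of colour c.\<close>

record 'a col_operad =
  elts :: "'a set"
  ar   :: "'a \<Rightarrow> nat"
  outc :: "'a \<Rightarrow> nat"
  inc  :: "'a \<Rightarrow> nat \<Rightarrow> nat"
  comp :: "'a \<Rightarrow> nat \<Rightarrow> 'a \<Rightarrow> 'a"
  unit :: "nat \<Rightarrow> 'a"

definition coloured_operad :: "nat \<Rightarrow> 'a col_operad \<Rightarrow> bool" where
  "coloured_operad k C \<longleftrightarrow>
     (\<forall>x\<in>elts C. ar C x \<ge> 1 \<and> outc C x \<in> {1..k} \<and> (\<forall>i\<in>{1..ar C x}. inc C x i \<in> {1..k})) \<and>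
     (\<forall>c\<in>{1..k}. unit C c \<in> elts C \<and> ar C (unit C c) = 1 \<and> outc C (unit C c) = c
                 \<and> inc C (unit C c) 1 = c) \<and>
     (\<forall>x\<in>elts C. ar C x = 1 \<longrightarrow> (\<exists>c\<in>{1..k}. x = unit C c)) \<and>
     (\<forall>n. finite {x\<in>elts C. ar C x = n}) \<and>
     (\<forall>x\<in>elts C. \<forall>y\<in>elts C. \<forall>i\<in>{1..ar C x}. outc C y = inc C x i \<longrightarrow>
        comp C x i y \<in> elts C \<and> ar C (comp C x i y) = ar C x + ar C y - 1 \<and>
        outc C (comp C x i y) = outc C x \<and>
        (\<forall>j\<in>{1..ar C x + ar C y - 1}. inc C (comp C x i y) j =
            (if j < i then inc C x j
             else if j < i + ar C y then inc C y (j - i + 1)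
             else inc C x (j - ar C y + 1)))) \<and>
     (\<forall>x\<in>elts C. \<forall>y\<in>elts C. \<forall>z\<in>elts C. \<forall>i\<in>{1..ar C x}. \<forall>j\<in>{1..ar C y}.
        outc C y = inc C x i \<longrightarrow> outc C z = inc C y j \<longrightarrow>
        comp C (comp C x i y) (i + j - 1) z = comp C x i (comp C y j z)) \<and>
     (\<forall>x\<in>elts C. \<forall>y\<in>elts C. \<forall>z\<in>elts C. \<forall>i j. 1 \<le> i \<longrightarrow> i < j \<longrightarrow> j \<le> ar C x \<longrightarrow>
        outc C y = inc C x i \<longrightarrow> outc C z = inc C x j \<longrightarrow>
        comp C (comp C x i y) (j + ar C y - 1) z = comp C (comp C x j z) i y) \<and>
     (\<forall>x\<in>elts C. comp C (unit C (outc C x)) 1 x = x \<and>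
        (\<forall>i\<in>{1..ar C x}. comp C x i (unit C (inc C x i)) = x))"

datatype 'a tree = Leaf | Node 'a "'a tree list"

fun leaves :: "'a tree \<Rightarrow> nat" where
  "leaves Leaf = 1"
| "leaves (Node x ts) = sum_list (map leaves ts)"

text \<open>Syntax trees of the (uncoloured) free operad on C^+: internal nodes of arity l labelled
  by elements of C(l), l \<noteq> 1.\<close>
inductive ftree :: "('a, 'b) col_operad_scheme \<Rightarrow> 'a tree \<Rightarrow> bool" for C where
  ftree_leaf: "ftree C Leaf"
| ftree_node: "x \<in> elts C \<Longrightarrow> ar C x \<noteq> 1 \<Longrightarrow> length ts = ar C x \<Longrightarrow>
     (\<forall>t\<in>set ts. ftree C t) \<Longrightarrow> ftree C (Node x ts)"

text \<open>Grafting s on the i-th leaf (1-based, left to right) of t: the partial composition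
  t o_i s of the free operad.\<close>
fun graft :: "'a tree \<Rightarrow> nat \<Rightarrow> 'a tree \<Rightarrow> 'a tree"
and graft_list :: "'a tree list \<Rightarrow> nat \<Rightarrow> 'a tree \<Rightarrow> 'a tree list" where
  "graft Leaf i s = (if i = 1 then s else Leaf)"
| "graft (Node x ts) i s = Node x (graft_list ts i s)"
| "graft_list [] i s = []"
| "graft_list (t # ts) i s =
     (if i \<le> leaves t then graft t i s # ts else t # graft_list ts (i - leaves t) s)"

definition corolla :: "('a, 'b) col_operad_scheme \<Rightarrow> 'a \<Rightarrow> 'a tree" where
  "corolla C x = Node x (replicate (ar C x) Leaf)"

inductive env_rel :: "('a, 'b) col_operad_scheme \<Rightarrow> 'a tree \<Rightarrow> 'a tree \<Rightarrow> bool" for C where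
  env_gen: "x \<in> elts C \<Longrightarrow> ar C x \<noteq> 1 \<Longrightarrow> y \<in> elts C \<Longrightarrow> ar C y \<noteq> 1 \<Longrightarrow>
     1 \<le> i \<Longrightarrow> i \<le> ar C x \<Longrightarrow> outc C y = inc C x i \<Longrightarrow>
     env_rel C (graft (corolla C x) i (corolla C y)) (corolla C (comp C x i y))"
| env_refl: "ftree C t \<Longrightarrow> env_rel C t t"
| env_sym: "env_rel C s t \<Longrightarrow> env_rel C t s"
| env_trans: "env_rel C s t \<Longrightarrow> env_rel C t u \<Longrightarrow> env_rel C s u"
| env_left: "env_rel C s s' \<Longrightarrow> ftree C t \<Longrightarrow> 1 \<le> i \<Longrightarrow> i \<le> leaves t \<Longrightarrow>
     env_rel C (graft t i s) (graft t i s')"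
| env_right: "env_rel C s s' \<Longrightarrow> ftree C t \<Longrightarrow> 1 \<le> i \<Longrightarrow> i \<le> leaves s \<Longrightarrow>
     env_rel C (graft s i t) (graft s' i t)"

definition Env :: "('a, 'b) col_operad_scheme \<Rightarrow> nat \<Rightarrow> 'a tree set set" where
  "Env C n = {t. ftree C t \<and> leaves t = n} // {(s, t). env_rel C s t}"

definition env_hilbert :: "('a, 'b) col_operad_scheme \<Rightarrow> int fps" where
  "env_hilbert C = Abs_fps (\<lambda>n. of_nat (card (Env C n)))"

inductive anti :: "('a, 'b) col_operad_scheme \<Rightarrow> 'a tree \<Rightarrow> bool" for C where
  anti_leaf: "anti C Leaf"
| anti_node: "x \<in> elts C \<Longrightarrow> ar C x \<noteq> 1 \<Longrightarrow> length ts = ar C x \<Longrightarrow>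
     (\<forall>i<length ts. anti C (ts ! i) \<and>
        (\<forall>y us. ts ! i = Node y us \<longrightarrow> outc C y \<noteq> inc C x (Suc i))) \<Longrightarrow>
     anti C (Node x ts)"

definition anti_hilbert :: "('a, 'b) col_operad_scheme \<Rightarrow> nat \<Rightarrow> int fps" where
  "anti_hilbert C c = Abs_fps (\<lambda>n. of_nat (card
     {t. anti C t \<and> leaves t = n \<and> (\<exists>x ts. t = Node x ts \<and> outc C x = c)}))"

text \<open>B_c as a multivariate series in z_1..z_k: its coefficient at the monomial
  prod_d z_d^(alpha d) (alpha supported on 1..k).\<close>
definition coloured_hilbert :: "('a, 'b) col_operad_scheme \<Rightarrow> nat \<Rightarrow> (nat \<Rightarrow> nat) \<Rightarrow> nat" where
  "coloured_hilbert C c \<alpha> = card {x \<in> elts C. ar C x \<noteq> 1 \<and> outc C x = c \<and>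
      (\<forall>d. \<alpha> d = card {i \<in> {1..ar C x}. inc C x i = d})}"

text \<open>Substitution z_d := F d into a multivariate series B (given by its coefficients) in
  k variables. This is the usual composition, valid when all F d have zero constant term:
  then only monomials of total degree \<le> m contribute to the coefficient of t^m.\<close>
definition msubst :: "nat \<Rightarrow> ((nat \<Rightarrow> nat) \<Rightarrow> nat) \<Rightarrow> (nat \<Rightarrow> int fps) \<Rightarrow> int fps" where
  "msubst k B F = Abs_fps (\<lambda>m. \<Sum>\<alpha> \<in> {\<alpha>. (\<forall>d. d \<notin> {1..k} \<longrightarrow> \<alpha> d = 0) \<and> (\<Sum>d\<in>{1..k}. \<alpha> d) \<le> m}.
      of_nat (B \<alpha>) * fps_nth (\<Prod>d\<in>{1..k}. F d ^ \<alpha> d) m)"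

end

theory Submission
  imports Defs
begin

text \<open>Each class of the enveloping congruence contains exactly one anticoloured tree. Contracting,
  bottom-up, every edge along which the colours match yields a normal form that is anticoloured,
  fixes anticoloured trees, is reached from any tree by edge contractions (each of which stays in the
  class), and is invariant under the generating relations and under grafting. So \<open>Env(C)(n)\<close> is
  counted by the anticoloured trees with \<open>n\<close> leaves, i.e. the leaf or a tree whose root has some output
  colour \<open>c\<close>. Such a tree is a root \<open>x \<in> C\<^sup>+\<close> of output colour \<open>c\<close> together with, at each input
  of colour \<open>d\<close>, an anticoloured tree whose root does not have output colour \<open>d\<close>; these are counted
  by \<open>H - H\<^sub>d\<close>, which gives the substitution formula.\<close>

lemma prod_list_map_eq_prod_count:
  fixes f :: "'a \<Rightarrow> 'b :: comm_monoid_mult"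
  assumes "finite X" "set xs \<subseteq> X"
  shows "prod_list (map f xs) = (\<Prod>x\<in>X. f x ^ count_list xs x)"
  using assms(2)
proof (induction xs)
  case Nil
  then show ?case by simp
next
  case (Cons a xs)
  have "(\<Prod>x\<in>X. f x ^ count_list (a # xs) x) = (\<Prod>x\<in>X. f x ^ count_list xs x * (if x = a then f x else 1))"
    by (intro prod.cong) (auto simp: mult.commute)
  also have "\<dots> = (\<Prod>x\<in>X. f x ^ count_list xs x) * f a"
    using Cons.prems assms(1) by (simp add: prod.distrib prod.delta)
  finally show ?case
    using Cons by (simp add: mult.commute)
qed

lemma finite_bounded_exponents:
  assumes "finite I"
  shows "finite {\<alpha> :: 'a \<Rightarrow> nat. (\<forall>d. d \<notin> I \<longrightarrow> \<alpha> d = 0) \<and> sum \<alpha> I \<le> m}"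
proof (rule finite_subset)
  show "finite {\<alpha>. \<forall>d. (d \<in> I \<longrightarrow> \<alpha> d \<in> {0..m}) \<and> (d \<notin> I \<longrightarrow> \<alpha> d = 0)}"
    using assms by (intro finite_set_of_finite_funs) auto
  show "{\<alpha>. (\<forall>d. d \<notin> I \<longrightarrow> \<alpha> d = 0) \<and> sum \<alpha> I \<le> m}
      \<subseteq> {\<alpha>. \<forall>d. (d \<in> I \<longrightarrow> \<alpha> d \<in> {0..m}) \<and> (d \<notin> I \<longrightarrow> \<alpha> d = 0)}"
  proof safe
    fix \<alpha> d
    assume "sum \<alpha> I \<le> m" "d \<in> I"
    then show "\<alpha> d \<in> {0..m}"
      using member_le_sum[of d I \<alpha>] assms by simp
  qed simp
qed

lemma length_graft_list [simp]: "length (graft_list ts i s) = length ts"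
  by (induction ts arbitrary: i) auto

lemma graft_list_append:
  "1 \<le> i \<Longrightarrow> graft_list (A @ B) i s =
     (if i \<le> sum_list (map leaves A) then graft_list A i s @ B
      else A @ graft_list B (i - sum_list (map leaves A)) s)"
proof (induction A arbitrary: i)
  case (Cons a A)
  then show ?case
    using Cons.IH[of "i - leaves a"] by (auto simp: algebra_simps)
qed simp

lemma graft_list_middle_cases [consumes 2]:
  assumes "1 \<le> i" "sum_list (map leaves M') = sum_list (map leaves M)"
  obtains (outside) A' B' where "length A' = length A"
      "graft_list (A @ M @ B) i t = A' @ M @ B'" "graft_list (A @ M' @ B) i t = A' @ M' @ B'"
    | (inside) j where "1 \<le> j" "j \<le> sum_list (map leaves M)"
      "graft_list (A @ M @ B) i t = A @ graft_list M j t @ B"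
      "graft_list (A @ M' @ B) i t = A @ graft_list M' j t @ B"
proof -
  let ?a = "sum_list (map leaves A)" and ?m = "sum_list (map leaves M)"
  consider "i \<le> ?a" | "\<not> i \<le> ?a" "i - ?a \<le> ?m" | "\<not> i \<le> ?a" "\<not> i - ?a \<le> ?m"
    by blast
  then show thesis
  proof cases
    case 1
    then show ?thesis
      using outside[of "graft_list A i t" B] assms by (simp add: graft_list_append)
  next
    case 2
    then show ?thesis
      using inside[of "i - ?a"] assms by (simp add: graft_list_append)
  next
    case 3
    then show ?thesis
      using outside[of A "graft_list B (i - ?a - ?m) t"] assms by (simp add: graft_list_append)
  qed
qed

lemma graft_into_child:
  "1 \<le> i \<Longrightarrow> i \<le> leaves c \<Longrightarrow>
   graft (Node x (A @ [c] @ B)) (sum_list (map leaves A) + i) s = Node x (A @ [graft c i s] @ B)"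
  by (simp add: graft_list_append)

lemma graft_Node_Leaves:
  assumes "1 \<le> i" "i \<le> n"
  shows "graft (Node x (replicate n Leaf)) i s =
           Node x (replicate (i - 1) Leaf @ [s] @ replicate (n - i) Leaf)"
proof -
  have "replicate n Leaf = replicate (i - 1) Leaf @ [Leaf] @ replicate (n - i) (Leaf :: 'a tree)"
    using assms by (simp flip: replicate_add replicate_Suc)
  then show ?thesis
    using graft_into_child[of 1 Leaf x "replicate (i - 1) Leaf" "replicate (n - i) Leaf" s] assms
    by (simp add: sum_list_replicate)
qed

lemma leaves_graft_ge: "1 \<le> leaves s \<Longrightarrow> leaves t \<le> leaves (graft t i s)"
  and leaves_graft_list_ge:
    "1 \<le> leaves s \<Longrightarrow> sum_list (map leaves ts) \<le> sum_list (map leaves (graft_list ts i s))"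
  by (induction t i s and ts i s rule: graft_graft_list.induct) auto

text \<open>\<open>s\<^sub>j\<close> goes to the leaf \<open>i + j - 1\<close>; grafting from the right keeps the leaves still
  to be used in place.\<close>
fun graft_seq :: "'a tree \<Rightarrow> nat \<Rightarrow> 'a tree list \<Rightarrow> 'a tree" where
  "graft_seq t i [] = t"
| "graft_seq t i (s # ss) = graft (graft_seq t (Suc i) ss) i s"

lemma graft_seq_append: "graft_seq t i (A @ B) = graft_seq (graft_seq t (i + length A) B) i A"
  by (induction A arbitrary: i) auto

lemma graft_seq_Leaves:
  "length ss = m \<Longrightarrow>
   graft_seq (Node x (A @ replicate m Leaf @ B)) (sum_list (map leaves A) + 1) ss = Node x (A @ ss @ B)"
proof (induction ss arbitrary: A m)
  case (Cons s ss)
  then obtain m' where m: "m = Suc m'" "length ss = m'"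
    by auto
  have "graft_seq (Node x ((A @ [Leaf]) @ replicate m' Leaf @ B)) (sum_list (map leaves (A @ [Leaf])) + 1) ss
          = Node x ((A @ [Leaf]) @ ss @ B)"
    using Cons.IH m by blast
  then show ?case
    using m graft_into_child[of 1 Leaf x A "ss @ B" s] by simp
qed simp

lemma leaves_graft_seq_ge: "\<forall>s\<in>set ss. 1 \<le> leaves s \<Longrightarrow> leaves t \<le> leaves (graft_seq t i ss)"
  by (induction ss arbitrary: i) (auto intro: order_trans[OF _ leaves_graft_ge])

lemma graft_seq_into_child:
  "1 \<le> i \<Longrightarrow> i - 1 + length ss \<le> leaves c \<Longrightarrow> \<forall>s\<in>set ss. 1 \<le> leaves s \<Longrightarrow>
   graft_seq (Node x (A @ [c] @ B)) (sum_list (map leaves A) + i) ss = Node x (A @ [graft_seq c i ss] @ B)"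
proof (induction ss arbitrary: i)
  case (Cons s ss)
  have "i \<le> leaves (graft_seq c (Suc i) ss)"
    using Cons.prems leaves_graft_seq_ge[of ss c "Suc i"] by simp
  then show ?case
    using Cons.IH[of "Suc i"] Cons.prems graft_into_child[of i "graft_seq c (Suc i) ss" x A B s]
    by simp
qed simp

lemma ftree_Node_iff:
  "ftree C (Node x ts) \<longleftrightarrow> x \<in> elts C \<and> ar C x \<noteq> 1 \<and> length ts = ar C x \<and> (\<forall>t\<in>set ts. ftree C t)"
  by (auto elim: ftree.cases intro: ftree.intros)

lemma ftree_corolla: "x \<in> elts C \<Longrightarrow> ar C x \<noteq> 1 \<Longrightarrow> ftree C (corolla C x)"
  by (simp add: corolla_def ftree_Node_iff ftree_leaf)

lemma ftree_graft: "ftree C t \<Longrightarrow> ftree C s \<Longrightarrow> ftree C (graft t i s)"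
proof (induction t arbitrary: i)
  case (Node x ts)
  have "\<forall>u\<in>set (graft_list us j s). ftree C u" if "set us \<subseteq> set ts" for us j
    using that
  proof (induction us arbitrary: j)
    case (Cons u us)
    then show ?case
      using Node by (auto simp: ftree_Node_iff)
  qed simp
  from this[of ts i] show ?case
    using Node.prems by (simp add: ftree_Node_iff)
qed (simp add: ftree_leaf)

definition in_cols :: "('a, 'b) col_operad_scheme \<Rightarrow> 'a \<Rightarrow> nat list" where
  "in_cols C x = map (inc C x) [1..<Suc (ar C x)]"

lemma length_in_cols [simp]: "length (in_cols C x) = ar C x"
  by (simp add: in_cols_def del: upt_Suc)

lemma nth_in_cols: "i < ar C x \<Longrightarrow> in_cols C x ! i = inc C x (Suc i)"
  by (simp add: in_cols_def del: upt_Suc)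

lemma drop_in_cols:
  assumes "1 \<le> i" "i \<le> ar C x"
  shows "drop (i - 1) (in_cols C x) = inc C x i # drop i (in_cols C x)"
proof -
  have "drop (i - 1) (in_cols C x) = in_cols C x ! (i - 1) # drop (Suc (i - 1)) (in_cols C x)"
    by (rule Cons_nth_drop_Suc[symmetric]) (use assms in simp)
  then show ?thesis
    using assms by (simp add: nth_in_cols)
qed

lemma count_list_in_cols: "count_list (in_cols C x) d = card {i \<in> {1..ar C x}. inc C x i = d}"
proof -
  have "count_list (in_cols C x) d = card {i. i < ar C x \<and> d = in_cols C x ! i}"
    by (simp add: count_list_eq_length_filter length_filter_conv_card)
  also have "{i. i < ar C x \<and> d = in_cols C x ! i} = {i. i < ar C x \<and> inc C x (Suc i) = d}"
    by (auto simp: nth_in_cols)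
  also have "card \<dots> = card (Suc ` {i. i < ar C x \<and> inc C x (Suc i) = d})"
    by (simp add: card_image)
  also have "Suc ` {i. i < ar C x \<and> inc C x (Suc i) = d} = {i \<in> {1..ar C x}. inc C x i = d}"
  proof (rule set_eqI)
    fix j
    show "j \<in> Suc ` {i. i < ar C x \<and> inc C x (Suc i) = d} \<longleftrightarrow> j \<in> {i \<in> {1..ar C x}. inc C x i = d}"
      by (cases j) auto
  qed
  finally show ?thesis .
qed

definition no_root_colour :: "('a, 'b) col_operad_scheme \<Rightarrow> nat \<Rightarrow> 'a tree \<Rightarrow> bool" where
  "no_root_colour C d t \<longleftrightarrow> (\<forall>y us. t = Node y us \<longrightarrow> outc C y \<noteq> d)"

lemma anti_Node_iff:
  "anti C (Node x ts) \<longleftrightarrow> x \<in> elts C \<and> ar C x \<noteq> 1 \<and> length ts = ar C x \<and>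
     list_all2 (\<lambda>t d. anti C t \<and> no_root_colour C d t) ts (in_cols C x)"
  by (auto elim: anti.cases intro: anti.intros simp: no_root_colour_def list_all2_conv_all_nth nth_in_cols)

lemma anti_imp_ftree: "anti C t \<Longrightarrow> ftree C t"
  by (induction rule: anti.induct) (auto simp: ftree_Node_iff in_set_conv_nth ftree_leaf)

locale k_coloured_operad =
  fixes k :: nat and C :: "'a col_operad"
  assumes coloured_operad: "coloured_operad k C"
begin

lemma ar_pos: "x \<in> elts C \<Longrightarrow> 1 \<le> ar C x"
  and outc_range: "x \<in> elts C \<Longrightarrow> outc C x \<in> {1..k}"
  and inc_range: "x \<in> elts C \<Longrightarrow> 1 \<le> i \<Longrightarrow> i \<le> ar C x \<Longrightarrow> inc C x i \<in> {1..k}"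
  using coloured_operad unfolding coloured_operad_def by auto

lemma unit_in: "c \<in> {1..k} \<Longrightarrow> unit C c \<in> elts C"
  and ar_unit: "c \<in> {1..k} \<Longrightarrow> ar C (unit C c) = 1"
  and outc_unit: "c \<in> {1..k} \<Longrightarrow> outc C (unit C c) = c"
  and inc_unit: "c \<in> {1..k} \<Longrightarrow> inc C (unit C c) 1 = c"
  using coloured_operad unfolding coloured_operad_def by auto

lemma finite_arity: "finite {x \<in> elts C. ar C x = n}"
  using coloured_operad unfolding coloured_operad_def by auto

lemma comp_in:
  assumes "x \<in> elts C" "y \<in> elts C" "1 \<le> i" "i \<le> ar C x" "outc C y = inc C x i"
  shows "comp C x i y \<in> elts C"
    and ar_comp: "ar C (comp C x i y) = ar C x + ar C y - 1"
    and outc_comp: "outc C (comp C x i y) = outc C x"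
    and inc_comp: "\<And>j. 1 \<le> j \<Longrightarrow> j \<le> ar C x + ar C y - 1 \<Longrightarrow> inc C (comp C x i y) j =
            (if j < i then inc C x j
             else if j < i + ar C y then inc C y (j - i + 1)
             else inc C x (j - ar C y + 1))"
  using coloured_operad assms unfolding coloured_operad_def by auto

lemma comp_assoc_seq:
  "x \<in> elts C \<Longrightarrow> y \<in> elts C \<Longrightarrow> z \<in> elts C \<Longrightarrow> 1 \<le> i \<Longrightarrow> i \<le> ar C x \<Longrightarrow>
   1 \<le> j \<Longrightarrow> j \<le> ar C y \<Longrightarrow> outc C y = inc C x i \<Longrightarrow> outc C z = inc C y j \<Longrightarrow>
   comp C (comp C x i y) (i + j - 1) z = comp C x i (comp C y j z)"
  using coloured_operad unfolding coloured_operad_def by auto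

lemma comp_assoc_par:
  "x \<in> elts C \<Longrightarrow> y \<in> elts C \<Longrightarrow> z \<in> elts C \<Longrightarrow> 1 \<le> i \<Longrightarrow> i < j \<Longrightarrow> j \<le> ar C x \<Longrightarrow>
   outc C y = inc C x i \<Longrightarrow> outc C z = inc C x j \<Longrightarrow>
   comp C (comp C x i y) (j + ar C y - 1) z = comp C (comp C x j z) i y"
  using coloured_operad unfolding coloured_operad_def by blast

lemma comp_unit_right:
  "x \<in> elts C \<Longrightarrow> 1 \<le> i \<Longrightarrow> i \<le> ar C x \<Longrightarrow> comp C x i (unit C (inc C x i)) = x"
  using coloured_operad unfolding coloured_operad_def by auto

lemma in_cols_range: "x \<in> elts C \<Longrightarrow> set (in_cols C x) \<subseteq> {1..k}"
  using inc_range[of x] by (auto simp: in_cols_def simp del: upt_Suc)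

lemma in_cols_unit: "c \<in> {1..k} \<Longrightarrow> in_cols C (unit C c) = [c]"
  using inc_unit[of c] by (simp add: in_cols_def ar_unit)

lemma in_cols_comp:
  assumes "x \<in> elts C" "y \<in> elts C" "1 \<le> i" "i \<le> ar C x" "outc C y = inc C x i"
  shows "in_cols C (comp C x i y) = take (i - 1) (in_cols C x) @ in_cols C y @ drop i (in_cols C x)"
proof (rule nth_equalityI)
  have "1 \<le> ar C y"
    using ar_pos assms by auto
  then show "length (in_cols C (comp C x i y)) = length (take (i - 1) (in_cols C x) @ in_cols C y @ drop i (in_cols C x))"
    using ar_comp[OF assms] assms by simp
  fix j
  assume "j < length (in_cols C (comp C x i y))"
  then show "in_cols C (comp C x i y) ! j = (take (i - 1) (in_cols C x) @ in_cols C y @ drop i (in_cols C x)) ! j"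
    using ar_comp[OF assms] inc_comp[OF assms, of "Suc j"] assms \<open>1 \<le> ar C y\<close>
    by (auto simp: nth_append nth_in_cols min_def)
qed

text \<open>\<open>r\<^sub>j\<close> goes to the input \<open>i + j - 1\<close>; composing from the right keeps the inputs
  still to be used in place.\<close>
fun multicomp :: "'a \<Rightarrow> nat \<Rightarrow> 'a list \<Rightarrow> 'a" where
  "multicomp x i [] = x"
| "multicomp x i (r # rs) = comp C (multicomp x (Suc i) rs) i r"

lemma multicomp_append: "multicomp x i (A @ B) = multicomp (multicomp x (i + length A) B) i A"
  by (induction A arbitrary: i) auto

abbreviation outputs_match :: "'a list \<Rightarrow> nat list \<Rightarrow> bool" where
  "outputs_match rs cs \<equiv> list_all2 (\<lambda>r c. r \<in> elts C \<and> outc C r = c) rs cs"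

lemma multicomp_typed:
  assumes "x \<in> elts C" "1 \<le> i" "i - 1 + length rs = ar C x"
    and "outputs_match rs (drop (i - 1) (in_cols C x))"
  shows "multicomp x i rs \<in> elts C" "outc C (multicomp x i rs) = outc C x"
    "in_cols C (multicomp x i rs) = take (i - 1) (in_cols C x) @ concat (map (in_cols C) rs)"
proof -
  have "multicomp x i rs \<in> elts C \<and> outc C (multicomp x i rs) = outc C x \<and>
    in_cols C (multicomp x i rs) = take (i - 1) (in_cols C x) @ concat (map (in_cols C) rs)"
    using assms(2-4)
  proof (induction rs arbitrary: i)
    case (Cons r rs)
    let ?w = "multicomp x (Suc i) rs"
    have i: "i \<le> ar C x"
      using Cons.prems by simp
    have r: "r \<in> elts C" "outc C r = inc C x i" "outputs_match rs (drop i (in_cols C x))"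
      using Cons.prems drop_in_cols[OF Cons.prems(1) i] by auto
    have w: "?w \<in> elts C" "outc C ?w = outc C x"
      "in_cols C ?w = take i (in_cols C x) @ concat (map (in_cols C) rs)"
      using Cons.IH[of "Suc i"] Cons.prems r by auto
    then have "length (in_cols C ?w) \<ge> i" and "in_cols C ?w ! (i - 1) = in_cols C x ! (i - 1)"
      using i Cons.prems(1) by (auto simp: nth_append)
    then have arw: "i \<le> ar C ?w" and incw: "inc C ?w i = inc C x i"
      using i Cons.prems(1) by (auto simp: nth_in_cols)
    show ?case
      using comp_in[of ?w r i] outc_comp[of ?w r i] in_cols_comp[of ?w r i] w r incw arw i Cons.prems(1)
      by (simp add: min_def)
  qed (use assms(1) in simp)
  then show "multicomp x i rs \<in> elts C" "outc C (multicomp x i rs) = outc C x"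
    "in_cols C (multicomp x i rs) = take (i - 1) (in_cols C x) @ concat (map (in_cols C) rs)"
    by auto
qed

lemma inc_multicomp_less:
  assumes "x \<in> elts C" "1 \<le> i" "i - 1 + length rs = ar C x"
    and "outputs_match rs (drop (i - 1) (in_cols C x))" "1 \<le> p" "p < i"
  shows "inc C (multicomp x i rs) p = inc C x p" "p \<le> ar C (multicomp x i rs)"
proof -
  have cols: "in_cols C (multicomp x i rs) = take (i - 1) (in_cols C x) @ concat (map (in_cols C) rs)"
    using multicomp_typed assms by blast
  show le: "p \<le> ar C (multicomp x i rs)"
    using cols[THEN arg_cong[where f = length]] assms by simp
  have "p - 1 < i - 1" "p - 1 < ar C x"
    using assms by auto
  then have "in_cols C (multicomp x i rs) ! (p - 1) = in_cols C x ! (p - 1)"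
    using cols by (simp add: nth_append)
  then show "inc C (multicomp x i rs) p = inc C x p"
    using assms le by (simp add: nth_in_cols)
qed

lemma multicomp_comp_par:
  assumes "x \<in> elts C" "y \<in> elts C" "1 \<le> j" "j < i" "i - 1 + length B = ar C x"
    "outc C y = inc C x j" "outputs_match B (drop (i - 1) (in_cols C x))"
  shows "multicomp (comp C x j y) (i + ar C y - 1) B = comp C (multicomp x i B) j y"
  using assms(4,5,7)
proof (induction B arbitrary: i)
  case (Cons b B)
  let ?w = "multicomp x (Suc i) B"
  have i: "1 \<le> i" "i \<le> ar C x"
    using Cons.prems assms by auto
  have b: "b \<in> elts C" "outc C b = inc C x i" "outputs_match B (drop i (in_cols C x))"
    using Cons.prems drop_in_cols[OF i] by auto
  have "1 \<le> ar C y"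
    using ar_pos assms by auto
  then have IH: "multicomp (comp C x j y) (i + ar C y) B = comp C ?w j y"
    using Cons.IH[of "Suc i"] Cons.prems b by simp
  have "?w \<in> elts C" "inc C ?w j = inc C x j" "inc C ?w i = inc C x i" "i \<le> ar C ?w"
    using multicomp_typed[of x "Suc i" B] inc_multicomp_less[of x "Suc i" B] assms Cons.prems b i
    by auto
  then have "comp C (comp C ?w j y) (i + ar C y - 1) b = comp C (comp C ?w i b) j y"
    using comp_assoc_par[of ?w y b j i] assms b Cons.prems by auto
  then show ?case
    using IH \<open>1 \<le> ar C y\<close> by (simp add: Suc_diff_le)
qed simp

lemma comp_multicomp:
  assumes "w \<in> elts C" "y \<in> elts C" "1 \<le> j" "j \<le> ar C w" "outc C y = inc C w j"
    "1 \<le> i" "i - 1 + length S = ar C y" "outputs_match S (drop (i - 1) (in_cols C y))"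
  shows "comp C w j (multicomp y i S) = multicomp (comp C w j y) (j + i - 1) S"
  using assms(6-8)
proof (induction S arbitrary: i)
  case (Cons s S)
  let ?y = "multicomp y (Suc i) S"
  have i: "1 \<le> i" "i \<le> ar C y"
    using Cons.prems by auto
  have s: "s \<in> elts C" "outc C s = inc C y i" "outputs_match S (drop i (in_cols C y))"
    using Cons.prems drop_in_cols[OF i] by auto
  have y: "?y \<in> elts C" "outc C ?y = outc C y" "inc C ?y i = inc C y i" "i \<le> ar C ?y"
    using multicomp_typed[of y "Suc i" S] inc_multicomp_less[of y "Suc i" S] assms Cons.prems s i
    by auto
  have "comp C w j (multicomp y i (s # S)) = comp C (comp C w j ?y) (j + i - 1) s"
    using comp_assoc_seq[of w ?y s j i] assms y s i by auto
  also have "\<dots> = multicomp (comp C w j y) (j + i - 1) (s # S)"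
    using Cons.IH[of "Suc i"] Cons.prems s assms by simp
  finally show ?case .
qed simp

lemma multicomp_assoc:
  assumes "x \<in> elts C" "y \<in> elts C" "j = Suc (length A)"
    and "length A + 1 + length B = ar C x" "length S = ar C y" "outc C y = inc C x j"
    and "outputs_match A (take (j - 1) (in_cols C x))"
    and "outputs_match S (in_cols C y)" "outputs_match B (drop j (in_cols C x))"
  shows "multicomp x 1 (A @ [multicomp y 1 S] @ B) = multicomp (comp C x j y) 1 (A @ S @ B)"
proof -
  let ?w = "multicomp x (Suc j) B"
  have w: "?w \<in> elts C" "inc C ?w j = inc C x j" "j \<le> ar C ?w"
    using multicomp_typed[of x "Suc j" B] inc_multicomp_less[of x "Suc j" B] assms by auto
  have "1 \<le> ar C y"
    using ar_pos assms by auto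
  have "multicomp x 1 (A @ [multicomp y 1 S] @ B) = multicomp (comp C ?w j (multicomp y 1 S)) 1 A"
    using multicomp_append[of x 1 A] assms by simp
  also have "comp C ?w j (multicomp y 1 S) = multicomp (comp C ?w j y) j S"
    using comp_multicomp[of ?w y j 1 S] w assms by simp
  also have "comp C ?w j y = multicomp (comp C x j y) (j + ar C y) B"
    using multicomp_comp_par[of x y j "Suc j" B] assms \<open>1 \<le> ar C y\<close> by simp
  also have "multicomp (multicomp (multicomp (comp C x j y) (j + ar C y) B) j S) 1 A
      = multicomp (comp C x j y) 1 (A @ S @ B)"
    using multicomp_append[of "comp C x j y" 1 A] multicomp_append[of "comp C x j y" j S] assms
    by simp
  finally show ?thesis .
qed

lemma multicomp_units: "x \<in> elts C \<Longrightarrow> multicomp x 1 (map (unit C) (in_cols C x)) = x"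
proof -
  have "multicomp x i (map (unit C) (drop (i - 1) (in_cols C x))) = x"
    if "x \<in> elts C" "1 \<le> i" "i - 1 + n = ar C x" for n i
    using that
  proof (induction n arbitrary: i)
    case (Suc n)
    then have "multicomp x (Suc i) (map (unit C) (drop i (in_cols C x))) = x"
      using Suc.IH[of "Suc i"] by simp
    then show ?case
      using Suc.prems drop_in_cols[of i C x] comp_unit_right[of x i] by simp
  qed simp
  then show "x \<in> elts C \<Longrightarrow> multicomp x 1 (map (unit C) (in_cols C x)) = x"
    by fastforce
qed

subsection \<open>The normal form of a syntax tree\<close>

text \<open>Contracting the edge into a subtree \<open>t\<close> plugged into an input of colour \<open>c\<close>: if the root of
  \<open>t\<close> has output colour \<open>c\<close> its label is absorbed and its children are lifted, otherwise the unit
  of colour \<open>c\<close> is absorbed and \<open>t\<close> stays a child.\<close>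
definition contract_label :: "nat \<Rightarrow> 'a tree \<Rightarrow> 'a" where
  "contract_label c t = (case t of Node y ts \<Rightarrow> if outc C y = c then y else unit C c | Leaf \<Rightarrow> unit C c)"

definition contract_children :: "nat \<Rightarrow> 'a tree \<Rightarrow> 'a tree list" where
  "contract_children c t = (case t of Node y ts \<Rightarrow> if outc C y = c then ts else [t] | Leaf \<Rightarrow> [Leaf])"

lemma contract_no_root_colour:
  "no_root_colour C c t \<Longrightarrow> contract_label c t = unit C c \<and> contract_children c t = [t]"
  by (cases t) (auto simp: no_root_colour_def contract_label_def contract_children_def)

definition contract :: "'a \<Rightarrow> 'a tree list \<Rightarrow> 'a tree" where
  "contract x ts = Node (multicomp x 1 (map2 contract_label (in_cols C x) ts))
     (concat (map2 contract_children (in_cols C x) ts))"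

fun normal_form :: "'a tree \<Rightarrow> 'a tree" where
  "normal_form Leaf = Leaf"
| "normal_form (Node x ts) = contract x (map normal_form ts)"

lemma contract_label_typed:
  "c \<in> {1..k} \<Longrightarrow> ftree C t \<Longrightarrow> contract_label c t \<in> elts C \<and> outc C (contract_label c t) = c"
  by (cases t) (auto simp: contract_label_def ftree_Node_iff unit_in outc_unit)

lemma contract_children_typed:
  assumes "c \<in> {1..k}" "ftree C t"
  shows "length (contract_children c t) = ar C (contract_label c t)"
    and "\<forall>u\<in>set (contract_children c t). ftree C u"
    and "sum_list (map leaves (contract_children c t)) = leaves t"
  using assms by (cases t; auto simp: contract_label_def contract_children_def ftree_Node_iff ar_unit)+

lemma outputs_match_contract_labels:
  "length cs = length ts \<Longrightarrow> set cs \<subseteq> {1..k} \<Longrightarrow> \<forall>t\<in>set ts. ftree C t \<Longrightarrow>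
   outputs_match (map2 contract_label cs ts) cs"
  by (induction cs ts rule: list_induct2) (auto simp: contract_label_typed)

lemma contract_children_concat:
  assumes "length cs = length ts" "set cs \<subseteq> {1..k}" "\<forall>t\<in>set ts. ftree C t"
  shows "length (concat (map2 contract_children cs ts))
           = sum_list (map (ar C) (map2 contract_label cs ts))"
    and "length ts \<le> sum_list (map (ar C) (map2 contract_label cs ts))"
    and "\<forall>u\<in>set (concat (map2 contract_children cs ts)). ftree C u"
    and "sum_list (map leaves (concat (map2 contract_children cs ts))) = sum_list (map leaves ts)"
proof -
  have "set cs \<subseteq> {1..k} \<Longrightarrow> \<forall>t\<in>set ts. ftree C t \<Longrightarrow>
    length (concat (map2 contract_children cs ts)) = sum_list (map (ar C) (map2 contract_label cs ts)) \<and>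
    length ts \<le> sum_list (map (ar C) (map2 contract_label cs ts)) \<and>
    (\<forall>u\<in>set (concat (map2 contract_children cs ts)). ftree C u) \<and>
    sum_list (map leaves (concat (map2 contract_children cs ts))) = sum_list (map leaves ts)"
    using assms(1)
  proof (induction cs ts rule: list_induct2)
    case (Cons c cs t ts)
    then have "1 \<le> ar C (contract_label c t)"
      using contract_label_typed ar_pos by auto
    with Cons contract_children_typed[of c t] show ?case
      by auto
  qed simp
  then show "length (concat (map2 contract_children cs ts))
           = sum_list (map (ar C) (map2 contract_label cs ts))"
    and "length ts \<le> sum_list (map (ar C) (map2 contract_label cs ts))"
    and "\<forall>u\<in>set (concat (map2 contract_children cs ts)). ftree C u"
    and "sum_list (map leaves (concat (map2 contract_children cs ts))) = sum_list (map leaves ts)"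
    using assms by auto
qed

lemma ar_multicomp:
  assumes "x \<in> elts C" "length rs = ar C x" "outputs_match rs (in_cols C x)"
  shows "ar C (multicomp x 1 rs) = sum_list (map (ar C) rs)"
proof -
  have "in_cols C (multicomp x 1 rs) = concat (map (in_cols C) rs)"
    using multicomp_typed(3)[of x 1 rs] assms by simp
  then have "ar C (multicomp x 1 rs) = sum_list (map (length \<circ> in_cols C) rs)"
    by (metis length_in_cols length_concat map_map)
  also have "map (length \<circ> in_cols C) rs = map (ar C) rs"
    by simp
  finally show ?thesis .
qed

lemma contract_ftree:
  assumes "x \<in> elts C" "ar C x \<noteq> 1" "length ts = ar C x" "\<forall>t\<in>set ts. ftree C t"
  shows "ftree C (contract x ts)" "leaves (contract x ts) = sum_list (map leaves ts)"
proof -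
  let ?rs = "map2 contract_label (in_cols C x) ts"
  have len: "length (in_cols C x) = length ts"
    using assms by simp
  note children = contract_children_concat[OF len in_cols_range[OF assms(1)] assms(4)]
  have typed: "outputs_match ?rs (in_cols C x)"
    using outputs_match_contract_labels[OF len in_cols_range[OF assms(1)] assms(4)] .
  have ar: "ar C (multicomp x 1 ?rs) = sum_list (map (ar C) ?rs)"
    using ar_multicomp[OF assms(1) _ typed] assms by simp
  have "2 \<le> ar C x"
    using ar_pos[OF assms(1)] assms(2) by simp
  then have "ar C (multicomp x 1 ?rs) \<noteq> 1"
    using ar children(2) assms(3) by linarith
  moreover have "multicomp x 1 ?rs \<in> elts C"
    using multicomp_typed(1)[of x 1 ?rs] typed assms by simp
  ultimately show "ftree C (contract x ts)"
    using ar children(1,3) by (simp add: contract_def ftree_Node_iff)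
  show "leaves (contract x ts) = sum_list (map leaves ts)"
    using children(4) by (simp add: contract_def)
qed

lemma normal_form_ftree: "ftree C t \<Longrightarrow> ftree C (normal_form t) \<and> leaves (normal_form t) = leaves t"
proof (induction t)
  case (Node x ts)
  have x: "x \<in> elts C" "ar C x \<noteq> 1" "length ts = ar C x" "\<forall>t\<in>set ts. ftree C t"
    using Node.prems by (simp_all add: ftree_Node_iff)
  then have IH: "\<forall>t\<in>set ts. ftree C (normal_form t) \<and> leaves (normal_form t) = leaves t"
    using Node.IH by blast
  then have "sum_list (map (leaves \<circ> normal_form) ts) = sum_list (map leaves ts)"
    by (intro arg_cong[where f = sum_list] map_cong) auto
  then show ?case
    using contract_ftree[of x "map normal_form ts"] x IH by simp
qed simp

lemma anti_contract_children:
  "length cs = length ts \<Longrightarrow> set cs \<subseteq> {1..k} \<Longrightarrow> \<forall>t\<in>set ts. anti C t \<Longrightarrow>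
   list_all2 (\<lambda>u d. anti C u \<and> no_root_colour C d u) (concat (map2 contract_children cs ts))
     (concat (map (in_cols C) (map2 contract_label cs ts)))"
proof (induction cs ts rule: list_induct2)
  case (Cons c cs t ts)
  have "list_all2 (\<lambda>u d. anti C u \<and> no_root_colour C d u) (contract_children c t) (in_cols C (contract_label c t))"
  proof (cases t)
    case Leaf
    then show ?thesis
      using Cons.prems in_cols_unit
      by (simp add: contract_children_def contract_label_def no_root_colour_def anti_leaf)
  next
    case (Node y us)
    then show ?thesis
      using Cons.prems in_cols_unit
      by (auto simp: contract_children_def contract_label_def no_root_colour_def anti_Node_iff)
  qed
  then show ?case
    using Cons by (auto intro: list_all2_appendI)
qed simp

lemma anti_contract:
  assumes "x \<in> elts C" "ar C x \<noteq> 1" "length ts = ar C x" "\<forall>t\<in>set ts. anti C t"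
  shows "anti C (contract x ts)"
proof -
  let ?rs = "map2 contract_label (in_cols C x) ts"
  have len: "length (in_cols C x) = length ts"
    using assms by simp
  have ft: "\<forall>t\<in>set ts. ftree C t"
    using assms(4) anti_imp_ftree by blast
  have "outputs_match ?rs (in_cols C x)"
    using outputs_match_contract_labels[OF len in_cols_range[OF assms(1)] ft] .
  then have "in_cols C (multicomp x 1 ?rs) = concat (map (in_cols C) ?rs)"
    using multicomp_typed(3)[of x 1 ?rs] assms by simp
  moreover have "ftree C (contract x ts)"
    using contract_ftree(1)[OF assms(1-3) ft] .
  ultimately show ?thesis
    using anti_contract_children[OF len in_cols_range[OF assms(1)] assms(4)]
    by (simp add: contract_def anti_Node_iff ftree_Node_iff)
qed

lemma anti_normal_form: "ftree C t \<Longrightarrow> anti C (normal_form t)"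
proof (induction t)
  case (Node x ts)
  then show ?case
    unfolding normal_form.simps by (intro anti_contract) (auto simp: ftree_Node_iff)
qed (simp add: anti_leaf)

lemma normal_form_anti: "anti C t \<Longrightarrow> normal_form t = t"
proof (induction t)
  case (Node x ts)
  have x: "x \<in> elts C" "list_all2 (\<lambda>t d. anti C t \<and> no_root_colour C d t) ts (in_cols C x)"
    using Node.prems by (auto simp: anti_Node_iff)
  then have "\<forall>t\<in>set ts. anti C t"
    by (auto simp: list_all2_conv_all_nth in_set_conv_nth)
  with Node.IH have "map normal_form ts = ts"
    by (simp add: map_idI)
  moreover have "map2 contract_label (in_cols C x) ts = map (unit C) (in_cols C x)
      \<and> concat (map2 contract_children (in_cols C x) ts) = ts"
    using x(2) by (induction rule: list_all2_induct) (auto simp: contract_no_root_colour)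
  ultimately show ?case
    using multicomp_units x by (simp add: contract_def)
qed simp

lemma contract_assoc:
  assumes "x \<in> elts C" "y \<in> elts C" "j = Suc (length A)"
    and "length A + 1 + length B = ar C x" "length S = ar C y" "outc C y = inc C x j"
    and "\<forall>t\<in>set A \<union> set S \<union> set B. ftree C t"
  shows "contract x (A @ [contract y S] @ B) = contract (comp C x j y) (A @ S @ B)"
proof -
  let ?lab = "map2 contract_label" and ?chl = "map2 contract_children"
  have j: "1 \<le> j" "j \<le> ar C x"
    using assms by auto
  have "in_cols C x = take (j - 1) (in_cols C x) @ [inc C x j] @ drop j (in_cols C x)"
    using append_take_drop_id[of "j - 1" "in_cols C x"] drop_in_cols[OF j]
    by (metis append_Cons append_Nil)
  moreover have "length (take (j - 1) (in_cols C x)) = length A" "length (drop j (in_cols C x)) = length B"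
    using assms by simp_all
  ultimately obtain cA cB where cols_x: "in_cols C x = cA @ [inc C x j] @ cB" and
      len: "length cA = length A" "length cB = length B"
    by blast
  have cols_comp: "in_cols C (comp C x j y) = cA @ in_cols C y @ cB"
    using in_cols_comp[of x y j] cols_x len assms by simp
  have ranges: "set cA \<subseteq> {1..k}" "set cB \<subseteq> {1..k}" "set (in_cols C y) \<subseteq> {1..k}"
    using in_cols_range[of x] in_cols_range[of y] cols_x assms by auto
  have typed_y: "outputs_match (?lab (in_cols C y) S) (in_cols C y)"
    using outputs_match_contract_labels ranges assms by simp
  have "multicomp y 1 (?lab (in_cols C y) S) \<in> elts C \<and>
      outc C (multicomp y 1 (?lab (in_cols C y) S)) = inc C x j"
    using multicomp_typed[of y 1] typed_y assms by simp
  then have contract_y: "contract_label (inc C x j) (contract y S) = multicomp y 1 (?lab (in_cols C y) S)"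
      "contract_children (inc C x j) (contract y S) = concat (?chl (in_cols C y) S)"
    by (simp_all add: contract_def contract_label_def contract_children_def)
  have "multicomp x 1 (?lab cA A @ [multicomp y 1 (?lab (in_cols C y) S)] @ ?lab cB B)
      = multicomp (comp C x j y) 1 (?lab cA A @ ?lab (in_cols C y) S @ ?lab cB B)"
    by (rule multicomp_assoc)
      (use assms cols_x len ranges typed_y outputs_match_contract_labels in auto)
  then show ?thesis
    unfolding contract_def[of x] contract_def[of "comp C x j y"] cols_x cols_comp
    using len contract_y assms(5) by simp
qed

end

inductive contract_step :: "('a, 'b) col_operad_scheme \<Rightarrow> 'a tree \<Rightarrow> 'a tree \<Rightarrow> bool" for C where
  contract_root: "outc C y = inc C x (Suc (length A)) \<Longrightarrow>
    contract_step C (Node x (A @ [Node y us] @ B)) (Node (comp C x (Suc (length A)) y) (A @ us @ B))"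
| contract_child: "contract_step C t t' \<Longrightarrow> contract_step C (Node x (A @ [t] @ B)) (Node x (A @ [t'] @ B))"

lemma leaves_contract_step: "contract_step C s s' \<Longrightarrow> leaves s' = leaves s"
  by (induction rule: contract_step.induct) auto

lemma contract_step_graft: "contract_step C s s' \<Longrightarrow> 1 \<le> i \<Longrightarrow> contract_step C (graft s i t) (graft s' i t)"
proof (induction arbitrary: i rule: contract_step.induct)
  case (contract_root y x A us B)
  have leaves_eq: "sum_list (map leaves us) = sum_list (map leaves [Node y us])"
    by simp
  show ?case
    using contract_root.prems leaves_eq
  proof (cases rule: graft_list_middle_cases[where A = A and B = B and t = t])
    case (outside A' B')
    then show ?thesis
      using contract_step.contract_root[of C y x A' us B'] contract_root.hyps by simp
  next
    case (inside j)
    then show ?thesis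
      using contract_step.contract_root[of C y x A "graft_list us j t" B] contract_root.hyps by simp
  qed
next
  case (contract_child c c' x A B)
  have leaves_eq: "sum_list (map leaves [c']) = sum_list (map leaves [c])"
    using leaves_contract_step contract_child.hyps by simp
  show ?case
    using contract_child.prems leaves_eq
  proof (cases rule: graft_list_middle_cases[where A = A and B = B and t = t])
    case (outside A' B')
    then show ?thesis
      using contract_step.contract_child[OF contract_child.hyps, of x A' B'] by simp
  next
    case (inside j)
    then show ?thesis
      using contract_step.contract_child[OF contract_child.IH[of j], of x A B] leaves_eq by simp
  qed
qed

lemma contract_steps_graft:
  "(contract_step C)\<^sup>*\<^sup>* s s' \<Longrightarrow> 1 \<le> i \<Longrightarrow> (contract_step C)\<^sup>*\<^sup>* (graft s i t) (graft s' i t)"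
proof (induction rule: rtranclp_induct)
  case (step u v)
  then show ?case
    by (meson rtranclp.rtrancl_into_rtrancl contract_step_graft)
qed simp

lemma contract_steps_child:
  "(contract_step C)\<^sup>*\<^sup>* t t' \<Longrightarrow> (contract_step C)\<^sup>*\<^sup>* (Node x (A @ [t] @ B)) (Node x (A @ [t'] @ B))"
proof (induction rule: rtranclp_induct)
  case (step u v)
  then show ?case
    by (meson rtranclp.rtrancl_into_rtrancl contract_child)
qed simp

lemma contract_steps_children:
  "list_all2 (contract_step C)\<^sup>*\<^sup>* ts ts' \<Longrightarrow> (contract_step C)\<^sup>*\<^sup>* (Node x (A @ ts)) (Node x (A @ ts'))"
proof (induction arbitrary: A rule: list_all2_induct)
  case (Cons t ts t' ts')
  have "(contract_step C)\<^sup>*\<^sup>* (Node x (A @ [t] @ ts)) (Node x (A @ [t'] @ ts))"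
    using contract_steps_child[OF Cons.hyps(1)] .
  moreover have "(contract_step C)\<^sup>*\<^sup>* (Node x ((A @ [t']) @ ts)) (Node x ((A @ [t']) @ ts'))"
    using Cons.IH by blast
  ultimately show ?case
    by simp
qed simp

context k_coloured_operad
begin

lemma ftree_contract_step: "contract_step C s s' \<Longrightarrow> ftree C s \<Longrightarrow> ftree C s'"
proof (induction rule: contract_step.induct)
  case (contract_root y x A us B)
  let ?j = "Suc (length A)"
  have "x \<in> elts C" "length A + 1 + length B = ar C x" "y \<in> elts C" "length us = ar C y"
    using contract_root.prems by (auto simp: ftree_Node_iff)
  moreover have "1 \<le> ar C x" "1 \<le> ar C y"
    using ar_pos calculation by auto
  ultimately show ?case
    using comp_in[of x y ?j] ar_comp[of x y ?j] contract_root by (auto simp: ftree_Node_iff)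
next
  case (contract_child c c' x A B)
  then show ?case
    using leaves_contract_step by (auto simp: ftree_Node_iff)
qed

lemma ftree_contract_steps: "(contract_step C)\<^sup>*\<^sup>* s s' \<Longrightarrow> ftree C s \<Longrightarrow> ftree C s'"
  by (induction rule: rtranclp_induct) (auto intro: ftree_contract_step)

lemma normal_form_contract_step: "contract_step C s s' \<Longrightarrow> ftree C s \<Longrightarrow> normal_form s = normal_form s'"
proof (induction rule: contract_step.induct)
  case (contract_root y x A us B)
  then have "contract x (map normal_form A @ [contract y (map normal_form us)] @ map normal_form B)
      = contract (comp C x (Suc (length A)) y) (map normal_form A @ map normal_form us @ map normal_form B)"
    by (intro contract_assoc) (auto simp: ftree_Node_iff normal_form_ftree)
  then show ?case
    by simp
next
  case (contract_child c c' x A B)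
  then show ?case
    by (auto simp: ftree_Node_iff)
qed

lemma normal_form_contract_steps:
  "(contract_step C)\<^sup>*\<^sup>* s s' \<Longrightarrow> ftree C s \<Longrightarrow> normal_form s = normal_form s'"
proof (induction rule: rtranclp_induct)
  case (step t u)
  then show ?case
    using normal_form_contract_step ftree_contract_steps by metis
qed simp

lemma contract_steps_absorb_child:
  assumes "w \<in> elts C" "Suc (length A) \<le> ar C w"
  shows "(contract_step C)\<^sup>*\<^sup>* (Node w (A @ [t] @ R))
    (Node (comp C w (Suc (length A)) (contract_label (inc C w (Suc (length A))) t))
      (A @ contract_children (inc C w (Suc (length A))) t @ R))"
proof (cases "\<exists>y us. t = Node y us \<and> outc C y = inc C w (Suc (length A))")
  case True
  then obtain y us where "t = Node y us" "outc C y = inc C w (Suc (length A))"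
    by blast
  then show ?thesis
    using contract_root[of C y w A us R] by (simp add: contract_label_def contract_children_def)
next
  case False
  then have "no_root_colour C (inc C w (Suc (length A))) t"
    by (auto simp: no_root_colour_def)
  then show ?thesis
    using comp_unit_right[of w "Suc (length A)"] assms by (simp add: contract_no_root_colour)
qed

lemma contract_steps_contract_children:
  assumes "x \<in> elts C" "length A + length ts = ar C x" "\<forall>t\<in>set ts. ftree C t"
  shows "(contract_step C)\<^sup>*\<^sup>* (Node x (A @ ts))
    (Node (multicomp x (Suc (length A)) (map2 contract_label (drop (length A) (in_cols C x)) ts))
      (A @ concat (map2 contract_children (drop (length A) (in_cols C x)) ts)))"
  using assms(2,3)
proof (induction ts arbitrary: A)
  case (Cons t ts)
  let ?i = "Suc (length A)"
  let ?cs = "drop ?i (in_cols C x)"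
  let ?rs = "map2 contract_label ?cs ts"
  let ?w = "multicomp x (Suc ?i) ?rs"
  let ?R = "concat (map2 contract_children ?cs ts)"
  have i: "1 \<le> ?i" "?i \<le> ar C x"
    using Cons.prems by auto
  have cs: "length ?cs = length ts" "set ?cs \<subseteq> {1..k}"
    using Cons.prems(1) in_cols_range[OF assms(1)] set_drop_subset[of ?i "in_cols C x"] by auto
  have "outputs_match ?rs ?cs"
    using outputs_match_contract_labels[OF cs] Cons.prems(2) by simp
  then have typed: "outputs_match ?rs (drop (Suc ?i - 1) (in_cols C x))"
    by simp
  have len: "Suc ?i - 1 + length ?rs = ar C x"
    using Cons.prems(1) cs(1) by simp
  have "1 \<le> Suc ?i"
    by simp
  note w = multicomp_typed(1)[OF assms(1) this len typed]
    inc_multicomp_less[OF assms(1) this len typed i(1) lessI]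
  have "(contract_step C)\<^sup>*\<^sup>* (Node x (A @ t # ts)) (Node ?w (A @ [t] @ ?R))"
    using Cons.IH[of "A @ [t]"] Cons.prems by simp
  moreover have "(contract_step C)\<^sup>*\<^sup>* (Node ?w (A @ [t] @ ?R))
      (Node (comp C ?w ?i (contract_label (inc C x ?i) t)) (A @ contract_children (inc C x ?i) t @ ?R))"
    using contract_steps_absorb_child[OF w(1) w(3), of t ?R] unfolding w(2) .
  ultimately show ?case
    using drop_in_cols[OF i] by simp
qed simp

lemma contract_steps_normal_form: "ftree C t \<Longrightarrow> (contract_step C)\<^sup>*\<^sup>* t (normal_form t)"
proof (induction t)
  case (Node x ts)
  have x: "x \<in> elts C" "length ts = ar C x" "\<forall>t\<in>set ts. ftree C t"
    using Node.prems by (auto simp: ftree_Node_iff)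
  have "list_all2 (contract_step C)\<^sup>*\<^sup>* ts (map normal_form ts)"
    using Node.IH x(3) by (auto simp: list_all2_conv_all_nth)
  then have "(contract_step C)\<^sup>*\<^sup>* (Node x ts) (Node x (map normal_form ts))"
    using contract_steps_children[of C ts _ x "[]"] by simp
  also have "(contract_step C)\<^sup>*\<^sup>* (Node x (map normal_form ts)) (normal_form (Node x ts))"
    using contract_steps_contract_children[of x "[]" "map normal_form ts"] x normal_form_ftree
    by (simp add: contract_def)
  finally show ?case .
qed simp

subsection \<open>Normal forms classify the enveloping operad\<close>

lemma leaves_pos: "ftree C t \<Longrightarrow> 1 \<le> leaves t"
proof (induction t)
  case (Node x ts)
  then have "ts \<noteq> []" "\<forall>t\<in>set ts. 1 \<le> leaves t"
    using ar_pos[of x] by (fastforce simp: ftree_Node_iff)+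
  then show ?case
    by (cases ts) auto
qed simp

lemma graft_corollas:
  assumes "1 \<le> i" "i \<le> ar C x"
  shows "graft (corolla C x) i (corolla C y) =
    Node x (replicate (i - 1) Leaf @ [Node y (replicate (ar C y) Leaf)] @ replicate (ar C x - i) Leaf)"
  using graft_Node_Leaves[OF assms] by (simp add: corolla_def)

lemma contract_step_corollas:
  assumes "1 \<le> i" "i \<le> ar C x" "outc C y = inc C x i" "x \<in> elts C" "y \<in> elts C"
  shows "contract_step C (graft (corolla C x) i (corolla C y)) (corolla C (comp C x i y))"
proof -
  have "replicate (i - 1) Leaf @ replicate (ar C y) Leaf @ replicate (ar C x - i) Leaf
      = replicate (ar C (comp C x i y)) (Leaf :: 'a tree)"
    using ar_comp[of x y i] ar_pos[of y] assms by (simp flip: replicate_add)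
  then show ?thesis
    using contract_root[of C y x "replicate (i - 1) Leaf" "replicate (ar C y) Leaf" "replicate (ar C x - i) Leaf"]
      graft_corollas assms by (simp add: corolla_def)
qed

lemma env_rel_ftree: "env_rel C s t \<Longrightarrow> ftree C s \<and> ftree C t"
proof (induction rule: env_rel.induct)
  case (env_gen x y i)
  then have "ar C (comp C x i y) \<noteq> 1" "comp C x i y \<in> elts C"
    using ar_comp[of x y i] comp_in[of x y i] ar_pos[of x] ar_pos[of y] by auto
  then show ?case
    using env_gen.hyps by (auto intro!: ftree_graft ftree_corolla)
next
  case (env_left s s' t i)
  then show ?case
    using ftree_graft by blast
next
  case (env_right s s' t i)
  then show ?case
    using ftree_graft by blast
qed blast+

lemma normal_form_graft_left:
  "normal_form s = normal_form s' \<Longrightarrow> normal_form (graft t i s) = normal_form (graft t i s')"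
proof (induction t arbitrary: i)
  case (Node x ts)
  have "map normal_form (graft_list us i s) = map normal_form (graft_list us i s')"
    if "set us \<subseteq> set ts" for us i
    using that Node by (induction us arbitrary: i) auto
  then show ?case
    by simp
qed simp

lemma normal_form_graft_right:
  assumes "ftree C s" "ftree C t" "1 \<le> i"
  shows "normal_form (graft s i t) = normal_form (graft (normal_form s) i t)"
  using normal_form_contract_steps[OF contract_steps_graft[OF contract_steps_normal_form[OF assms(1)] assms(3)]
      ftree_graft[OF assms(1,2)]] .

lemma env_rel_normal_form: "env_rel C s t \<Longrightarrow> normal_form s = normal_form t"
proof (induction rule: env_rel.induct)
  case (env_gen x y i)
  then have "ftree C (graft (corolla C x) i (corolla C y))"
    by (auto intro!: ftree_graft ftree_corolla)
  then show ?case
    using normal_form_contract_step[OF contract_step_corollas[OF env_gen(5,6,7,1,3)]] by simp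
next
  case (env_left s s' t i)
  then show ?case
    by (intro normal_form_graft_left)
next
  case (env_right s s' t i)
  have "ftree C s" "ftree C s'"
    using env_rel_ftree[OF env_right.hyps(1)] by simp_all
  have "normal_form (graft s i t) = normal_form (graft (normal_form s) i t)"
    using normal_form_graft_right[OF \<open>ftree C s\<close> env_right.hyps(2,3)] .
  also have "\<dots> = normal_form (graft (normal_form s') i t)"
    using env_right.IH by simp
  also have "\<dots> = normal_form (graft s' i t)"
    using normal_form_graft_right[OF \<open>ftree C s'\<close> env_right.hyps(2,3)] by simp
  finally show ?case .
qed auto

lemma graft_seq_env_rel:
  "env_rel C s s' \<Longrightarrow> \<forall>t\<in>set ts. ftree C t \<Longrightarrow> 1 \<le> i \<Longrightarrow> i - 1 + length ts \<le> leaves s \<Longrightarrow>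
   env_rel C (graft_seq s i ts) (graft_seq s' i ts)"
proof (induction ts arbitrary: i)
  case (Cons t ts)
  have "leaves s \<le> leaves (graft_seq s (Suc i) ts)"
    using leaves_graft_seq_ge[of ts s "Suc i"] Cons.prems leaves_pos by auto
  then show ?case
    using env_right[OF Cons.IH[of "Suc i"]] Cons.prems by simp
qed simp

lemma graft_seq_corolla: "length ts = ar C z \<Longrightarrow> graft_seq (corolla C z) 1 ts = Node z ts"
  using graft_seq_Leaves[of ts "ar C z" z "[]" "[]"] by (simp add: corolla_def)

lemma graft_seq_corollas:
  assumes "j = Suc (length A)" "length A + 1 + length B = ar C x" "length us = ar C y"
    "\<forall>t\<in>set us. ftree C t"
  shows "graft_seq (graft (corolla C x) j (corolla C y)) 1 (A @ us @ B) = Node x (A @ [Node y us] @ B)"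
proof -
  let ?L = "replicate (length A) (Leaf :: 'a tree)"
  have "graft (corolla C x) j (corolla C y) = Node x (?L @ [corolla C y] @ replicate (length B) Leaf)"
    using graft_corollas[of j x y] assms by (simp add: corolla_def)
  moreover have "graft_seq (Node x ((?L @ [corolla C y]) @ replicate (length B) Leaf @ []))
      (sum_list (map leaves (?L @ [corolla C y])) + 1) B = Node x ((?L @ [corolla C y]) @ B @ [])"
    by (rule graft_seq_Leaves) simp
  moreover have "graft_seq (Node x (?L @ [corolla C y] @ B)) (sum_list (map leaves ?L) + 1) us
      = Node x (?L @ [graft_seq (corolla C y) 1 us] @ B)"
    by (rule graft_seq_into_child) (use assms leaves_pos in \<open>auto simp: corolla_def sum_list_replicate\<close>)
  moreover have "graft_seq (Node x (?L @ [Node y us] @ B)) 1 A = Node x (A @ [Node y us] @ B)"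
    using graft_seq_Leaves[of A "length A" x "[]" "[Node y us] @ B"] by simp
  ultimately show ?thesis
    using graft_seq_append[of _ 1 A "us @ B"] graft_seq_append[of _ j us B] graft_seq_corolla[of us y]
      assms by (simp add: corolla_def sum_list_replicate)
qed

lemma contract_step_env_rel: "contract_step C s s' \<Longrightarrow> ftree C s \<Longrightarrow> env_rel C s s'"
proof (induction rule: contract_step.induct)
  case (contract_root y x A us B)
  let ?j = "Suc (length A)" and ?z = "comp C x (Suc (length A)) y"
  have h: "x \<in> elts C" "ar C x \<noteq> 1" "length A + 1 + length B = ar C x" "y \<in> elts C" "ar C y \<noteq> 1"
    "length us = ar C y" "\<forall>t\<in>set (A @ us @ B). ftree C t"
    using contract_root.prems by (auto simp: ftree_Node_iff)
  have gen: "env_rel C (graft (corolla C x) ?j (corolla C y)) (corolla C ?z)"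
    using env_gen[of x C y ?j] h contract_root.hyps by auto
  have "leaves (graft (corolla C x) ?j (corolla C y)) = length (A @ us @ B)"
    using graft_corollas[of ?j x y] h by (simp add: sum_list_replicate)
  then have "env_rel C (graft_seq (graft (corolla C x) ?j (corolla C y)) 1 (A @ us @ B))
      (graft_seq (corolla C ?z) 1 (A @ us @ B))"
    using graft_seq_env_rel[OF gen, of "A @ us @ B" 1] h by simp
  moreover have "ar C ?z = length (A @ us @ B)"
    using ar_comp[of x y ?j] ar_pos[of y] h contract_root.hyps by simp
  ultimately show ?case
    using graft_seq_corollas[of ?j A B x us y] graft_seq_corolla[of "A @ us @ B" ?z] h by simp
next
  case (contract_child c c' x A B)
  have "ftree C c" "ftree C (Node x (A @ [Leaf] @ B))"
    using contract_child.prems by (auto simp: ftree_Node_iff ftree_leaf)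
  then have "env_rel C (graft (Node x (A @ [Leaf] @ B)) (sum_list (map leaves A) + 1) c)
     (graft (Node x (A @ [Leaf] @ B)) (sum_list (map leaves A) + 1) c')"
    by (intro env_left contract_child.IH) auto
  then show ?case
    using graft_into_child[of 1 Leaf x A B] by simp
qed

lemma env_rel_normal_form_self:
  assumes s: "ftree C s"
  shows "env_rel C s (normal_form s)"
proof -
  have "env_rel C s t" if "(contract_step C)\<^sup>*\<^sup>* s t" for t
    using that
  proof (induction rule: rtranclp_induct)
    case (step t u)
    then show ?case
      using contract_step_env_rel ftree_contract_steps env_trans s by blast
  qed (use s env_refl in blast)
  then show ?thesis
    using contract_steps_normal_form s by blast
qed

subsection \<open>Counting anticoloured syntax trees\<close>

definition anti_trees :: "nat \<Rightarrow> 'a tree set" where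
  "anti_trees n = {t. anti C t \<and> leaves t = n}"

definition anti_trees_out :: "nat \<Rightarrow> nat \<Rightarrow> 'a tree set" where
  "anti_trees_out c n = {t. anti C t \<and> leaves t = n \<and> (\<exists>x ts. t = Node x ts \<and> outc C x = c)}"

definition anti_trees_avoiding :: "nat \<Rightarrow> nat \<Rightarrow> 'a tree set" where
  "anti_trees_avoiding d n = {t. anti C t \<and> leaves t = n \<and> no_root_colour C d t}"

definition anti_forests :: "nat list \<Rightarrow> nat \<Rightarrow> 'a tree list set" where
  "anti_forests cs m = {ts. list_all2 (\<lambda>t d. anti C t \<and> no_root_colour C d t) ts cs \<and> sum_list (map leaves ts) = m}"

definition root_candidates :: "nat \<Rightarrow> nat \<Rightarrow> 'a set" where
  "root_candidates c m = {x \<in> elts C. ar C x \<noteq> 1 \<and> outc C x = c \<and> ar C x \<le> m}"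

lemma Env_eq_classes_of_anti_trees: "Env C n = (\<lambda>t. {u. env_rel C t u}) ` anti_trees n"
proof -
  have "{u. env_rel C t u} = {u. env_rel C (normal_form t) u}" if "ftree C t" for t
    using env_rel_normal_form_self[OF that] env_sym env_trans by blast
  moreover have "normal_form t \<in> anti_trees n" if "ftree C t" "leaves t = n" for t
    using that anti_normal_form normal_form_ftree by (auto simp: anti_trees_def)
  ultimately show ?thesis
    unfolding Env_def quotient_def anti_trees_def using anti_imp_ftree by fastforce
qed

lemma inj_on_classes_of_anti_trees: "inj_on (\<lambda>t. {u. env_rel C t u}) (anti_trees n)"
proof
  fix t t'
  assume t: "t \<in> anti_trees n" "t' \<in> anti_trees n" and "{u. env_rel C t u} = {u. env_rel C t' u}"
  moreover have "env_rel C t' t'"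
    using t anti_imp_ftree env_refl by (auto simp: anti_trees_def)
  ultimately have "normal_form t = normal_form t'"
    using env_rel_normal_form by blast
  then show "t = t'"
    using normal_form_anti t by (auto simp: anti_trees_def)
qed

lemma card_Env: "card (Env C n) = card (anti_trees n)"
  using Env_eq_classes_of_anti_trees inj_on_classes_of_anti_trees card_image by metis

lemma length_le_leaves: "\<forall>t\<in>set ts. ftree C t \<Longrightarrow> length ts \<le> sum_list (map leaves ts)"
  using leaves_pos by (induction ts) fastforce+

lemma leaves_child_less:
  assumes "ftree C (Node x ts)" "t \<in> set ts"
  shows "leaves t < leaves (Node x ts)"
proof -
  have x: "2 \<le> length ts" "\<forall>t\<in>set ts. ftree C t"
    using assms(1) ar_pos[of x] by (auto simp: ftree_Node_iff)
  moreover have "length (remove1 t ts) = length ts - 1"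
    using assms(2) by (simp add: length_remove1)
  ultimately have "remove1 t ts \<noteq> []"
    by auto
  moreover have "\<forall>u\<in>set (remove1 t ts). ftree C u"
    using x(2) by (meson notin_set_remove1)
  ultimately have "1 \<le> sum_list (map leaves (remove1 t ts))"
    using length_le_leaves[of "remove1 t ts"] by (cases "remove1 t ts") auto
  then show ?thesis
    using sum_list_map_remove1[OF assms(2), of leaves] by simp
qed

lemma finite_ftrees: "finite {t. ftree C t \<and> leaves t = n}"
proof (induction n rule: less_induct)
  case (less n)
  let ?S = "\<Union>m<n. {t. ftree C t \<and> leaves t = m}"
  let ?X = "{x \<in> elts C. ar C x \<le> n}"
  have "?X = (\<Union>m\<le>n. {x \<in> elts C. ar C x = m})"
    by auto
  then have "finite ?X"
    using finite_arity by simp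
  moreover have "finite ?S"
    using less by simp
  ultimately have "finite ({Leaf} \<union> (\<lambda>(x, ts). Node x ts) ` (?X \<times> {ts. set ts \<subseteq> ?S \<and> length ts \<le> n}))"
    using finite_lists_length_le by blast
  moreover have "{t. ftree C t \<and> leaves t = n} \<subseteq>
      {Leaf} \<union> (\<lambda>(x, ts). Node x ts) ` (?X \<times> {ts. set ts \<subseteq> ?S \<and> length ts \<le> n})"
  proof
    fix t
    assume t: "t \<in> {t. ftree C t \<and> leaves t = n}"
    show "t \<in> {Leaf} \<union> (\<lambda>(x, ts). Node x ts) ` (?X \<times> {ts. set ts \<subseteq> ?S \<and> length ts \<le> n})"
    proof (cases t)
      case (Node x ts)
      have "set ts \<subseteq> ?S"
        using t Node leaves_child_less[of x ts] by (auto simp: ftree_Node_iff)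
      moreover have "length ts \<le> n" "x \<in> elts C" "ar C x = length ts"
        using t Node length_le_leaves[of ts] by (auto simp: ftree_Node_iff)
      ultimately show ?thesis
        using Node by auto
    qed simp
  qed
  ultimately show ?case
    by (rule finite_subset[rotated])
qed

lemma finite_anti_trees: "finite (anti_trees n)"
  by (rule finite_subset[OF _ finite_ftrees[of n]]) (auto simp: anti_trees_def anti_imp_ftree)

lemma finite_anti_trees_out: "finite (anti_trees_out c n)"
  by (rule finite_subset[OF _ finite_anti_trees[of n]]) (auto simp: anti_trees_def anti_trees_out_def)

lemma finite_anti_trees_avoiding: "finite (anti_trees_avoiding d n)"
  by (rule finite_subset[OF _ finite_anti_trees[of n]]) (auto simp: anti_trees_def anti_trees_avoiding_def)

lemma anti_trees_eq:
  "anti_trees n = (if n = 1 then {Leaf} else {}) \<union> (\<Union>c\<in>{1..k}. anti_trees_out c n)"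
proof -
  have "outc C x \<in> {1..k}" if "anti C (Node x ts)" for x ts
    using that outc_range by (simp add: anti_Node_iff)
  then have "t \<in> anti_trees n \<longleftrightarrow> t \<in> (if n = 1 then {Leaf} else {}) \<union> (\<Union>c\<in>{1..k}. anti_trees_out c n)" for t
    by (cases t) (auto simp: anti_trees_def anti_trees_out_def anti_leaf)
  then show ?thesis
    by blast
qed

lemma card_anti_trees:
  "card (anti_trees n) = (if n = 1 then 1 else 0) + (\<Sum>c\<in>{1..k}. card (anti_trees_out c n))"
proof -
  have "card (\<Union>c\<in>{1..k}. anti_trees_out c n) = (\<Sum>c\<in>{1..k}. card (anti_trees_out c n))"
    using finite_anti_trees_out by (intro card_UN_disjoint) (auto simp: anti_trees_out_def)
  moreover have "Leaf \<notin> (\<Union>c\<in>{1..k}. anti_trees_out c n)"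
    by (simp add: anti_trees_out_def)
  ultimately show ?thesis
    unfolding anti_trees_eq by (cases "n = 1") (simp_all add: finite_anti_trees_out)
qed

lemma nth_env_hilbert: "fps_nth (env_hilbert C) n = of_nat (card (anti_trees n))"
  by (simp add: env_hilbert_def card_Env)

lemma nth_anti_hilbert: "fps_nth (anti_hilbert C c) n = of_nat (card (anti_trees_out c n))"
  by (simp add: anti_hilbert_def anti_trees_out_def)

lemma env_hilbert_eq_sum_anti_hilbert: "env_hilbert C = fps_X + (\<Sum>c\<in>{1..k}. anti_hilbert C c)"
  by (rule fps_ext) (simp add: nth_env_hilbert card_anti_trees fps_sum_nth nth_anti_hilbert)

lemma nth_env_hilbert_minus_anti_hilbert:
  "fps_nth (env_hilbert C - anti_hilbert C d) n = of_nat (card (anti_trees_avoiding d n))"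
proof -
  have "anti_trees n = anti_trees_out d n \<union> anti_trees_avoiding d n"
    "anti_trees_out d n \<inter> anti_trees_avoiding d n = {}"
    by (auto simp: anti_trees_def anti_trees_out_def anti_trees_avoiding_def no_root_colour_def)
  then have "card (anti_trees n) = card (anti_trees_out d n) + card (anti_trees_avoiding d n)"
    using finite_anti_trees_out finite_anti_trees_avoiding by (simp add: card_Un_disjoint)
  then show ?thesis
    by (simp add: nth_env_hilbert nth_anti_hilbert)
qed

lemma anti_forests_Cons:
  "anti_forests (d # cs) m = (\<Union>a\<in>{0..m}. (\<lambda>(t, ts). t # ts) ` (anti_trees_avoiding d a \<times> anti_forests cs (m - a)))"
  by (fastforce simp: anti_forests_def anti_trees_avoiding_def list_all2_Cons2)

lemma card_anti_forests:
  "finite (anti_forests cs m) \<and>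
   of_nat (card (anti_forests cs m)) = fps_nth (\<Prod>d\<leftarrow>cs. env_hilbert C - anti_hilbert C d) m"
proof (induction cs arbitrary: m)
  case Nil
  have "anti_forests [] m = (if m = 0 then {[]} else {})"
    by (auto simp: anti_forests_def)
  then show ?case
    by simp
next
  case (Cons d cs)
  let ?S = "\<lambda>a. (\<lambda>(t, ts). t # ts) ` (anti_trees_avoiding d a \<times> anti_forests cs (m - a))"
  have card_S: "card (?S a) = card (anti_trees_avoiding d a) * card (anti_forests cs (m - a))" for a
    by (subst card_image) (auto simp: inj_on_def card_cartesian_product)
  have "card (anti_forests (d # cs) m) = (\<Sum>a\<in>{0..m}. card (?S a))"
    unfolding anti_forests_Cons using Cons.IH finite_anti_trees_avoiding
    by (intro card_UN_disjoint) (auto simp: anti_trees_avoiding_def)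
  then have "(of_nat (card (anti_forests (d # cs) m)) :: int)
      = (\<Sum>a\<in>{0..m}. fps_nth (env_hilbert C - anti_hilbert C d) a
           * fps_nth (\<Prod>d\<leftarrow>cs. env_hilbert C - anti_hilbert C d) (m - a))"
    using Cons.IH by (simp add: card_S nth_env_hilbert_minus_anti_hilbert del: fps_sub_nth)
  then show ?case
    using Cons.IH finite_anti_trees_avoiding unfolding anti_forests_Cons by (simp add: fps_mult_nth)
qed

lemma anti_trees_out_eq: "anti_trees_out c m = (\<Union>x\<in>root_candidates c m. Node x ` anti_forests (in_cols C x) m)"
proof -
  have "ar C x \<le> sum_list (map leaves ts)" if "anti C (Node x ts)" for x ts
    using that length_le_leaves[of ts] anti_imp_ftree by (fastforce simp: ftree_Node_iff)
  moreover have "length ts = ar C x" if "list_all2 P ts (in_cols C x)" for P ts x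
    using list_all2_lengthD[OF that] by simp
  ultimately show ?thesis
    unfolding anti_trees_out_def root_candidates_def anti_forests_def
    by (auto simp: anti_Node_iff)
qed

lemma finite_root_candidates: "finite (root_candidates c m)"
  by (rule finite_subset[of _ "\<Union>n\<le>m. {x \<in> elts C. ar C x = n}"])
    (auto simp: root_candidates_def finite_arity)

lemma card_anti_trees_out:
  "card (anti_trees_out c m) = (\<Sum>x\<in>root_candidates c m. card (anti_forests (in_cols C x) m))"
  unfolding anti_trees_out_eq using finite_root_candidates card_anti_forests
  by (subst card_UN_disjoint) (auto simp: card_image inj_on_def)

abbreviation colour_profile :: "'a \<Rightarrow> nat \<Rightarrow> nat" where
  "colour_profile x \<equiv> count_list (in_cols C x)"

lemma sum_colour_profile: "x \<in> elts C \<Longrightarrow> (\<Sum>d\<in>{1..k}. colour_profile x d) = ar C x"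
  using sum_count_set[OF in_cols_range] by simp

lemma colour_profile_outside: "x \<in> elts C \<Longrightarrow> d \<notin> {1..k} \<Longrightarrow> colour_profile x d = 0"
  by (meson count_notin in_cols_range subsetD)

lemma coloured_hilbert_eq_card:
  assumes "\<forall>d. d \<notin> {1..k} \<longrightarrow> \<alpha> d = 0" "(\<Sum>d\<in>{1..k}. \<alpha> d) \<le> m"
  shows "coloured_hilbert C c \<alpha> = card {x \<in> root_candidates c m. colour_profile x = \<alpha>}"
proof -
  have profile: "colour_profile x = \<alpha> \<longleftrightarrow> (\<forall>d. \<alpha> d = card {i \<in> {1..ar C x}. inc C x i = d})" for x
    by (auto simp: count_list_in_cols)
  have "ar C x \<le> m" if "x \<in> elts C" "colour_profile x = \<alpha>" for x
    using sum_colour_profile[OF that(1)] that(2) assms(2) by simp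
  then have "{x \<in> root_candidates c m. colour_profile x = \<alpha>} = {x \<in> elts C. ar C x \<noteq> 1 \<and> outc C x = c \<and>
      (\<forall>d. \<alpha> d = card {i \<in> {1..ar C x}. inc C x i = d})}"
    unfolding root_candidates_def profile[symmetric] by blast
  then show ?thesis
    by (simp add: coloured_hilbert_def)
qed

lemma anti_hilbert_eq_msubst:
  "anti_hilbert C c = msubst k (coloured_hilbert C c) (\<lambda>d. env_hilbert C - anti_hilbert C d)"
proof (rule fps_ext)
  fix m
  let ?F = "\<lambda>d. env_hilbert C - anti_hilbert C d"
  let ?G = "\<lambda>\<alpha>. fps_nth (\<Prod>d\<in>{1..k}. ?F d ^ \<alpha> d) m"
  let ?Adm = "{\<alpha>. (\<forall>d. d \<notin> {1..k} \<longrightarrow> \<alpha> d = 0) \<and> (\<Sum>d\<in>{1..k}. \<alpha> d) \<le> m}"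
  let ?X = "root_candidates c m"
  have "finite ?Adm"
    using finite_bounded_exponents[of "{1..k}"] by simp
  have profile: "colour_profile ` ?X \<subseteq> ?Adm"
    using sum_colour_profile colour_profile_outside by (auto simp: root_candidates_def)
  have "fps_nth (anti_hilbert C c) m = (\<Sum>x\<in>?X. of_nat (card (anti_forests (in_cols C x) m)))"
    by (simp add: nth_anti_hilbert card_anti_trees_out)
  also have "\<dots> = (\<Sum>x\<in>?X. ?G (colour_profile x))"
  proof (rule sum.cong)
    fix x
    assume "x \<in> ?X"
    then have "prod_list (map ?F (in_cols C x)) = (\<Prod>d\<in>{1..k}. ?F d ^ colour_profile x d)"
      using prod_list_map_eq_prod_count[OF finite_atLeastAtMost in_cols_range, where f = ?F]
      by (simp add: root_candidates_def)
    then show "of_nat (card (anti_forests (in_cols C x) m)) = ?G (colour_profile x)"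
      using card_anti_forests[of "in_cols C x" m] by simp
  qed simp
  also have "\<dots> = (\<Sum>\<alpha>\<in>?Adm. \<Sum>x\<in>{x \<in> ?X. colour_profile x = \<alpha>}. ?G (colour_profile x))"
    using finite_root_candidates \<open>finite ?Adm\<close> profile by (intro sum.group[symmetric]) auto
  also have "\<dots> = (\<Sum>\<alpha>\<in>?Adm. of_nat (coloured_hilbert C c \<alpha>) * ?G \<alpha>)"
    using coloured_hilbert_eq_card by (intro sum.cong) auto
  also have "\<dots> = fps_nth (msubst k (coloured_hilbert C c) ?F) m"
    by (simp add: msubst_def)
  finally show "fps_nth (anti_hilbert C c) m = fps_nth (msubst k (coloured_hilbert C c) ?F) m" .
qed

end

theorem proposition1p3:
  fixes k :: nat and C :: "'a col_operad"
  assumes "k \<ge> 1" and "coloured_operad k C"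
  shows "env_hilbert C = fps_X + (\<Sum>c\<in>{1..k}. anti_hilbert C c)
     \<and> (\<forall>c\<in>{1..k}. anti_hilbert C c =
          msubst k (coloured_hilbert C c) (\<lambda>d. env_hilbert C - anti_hilbert C d))"
proof -
  interpret k_coloured_operad k C
    using assms(2) by unfold_locales
  show ?thesis
    using env_hilbert_eq_sum_anti_hilbert anti_hilbert_eq_msubst by blast
qed

end
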